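(* Let $w=w_1w_2\cdots w_n$ be a finite word over $\{0,1\}$ of length $n\ge 2$, and let $\hat e_w$ be the projection $\phi\mapsto\langle\phi,e_w\rangle e_w$. Then $\|K\hat e_w-\hat e_wK\|=1$, $\|L\hat e_w-\hat e_wL\|=1$, and therefore $\|[\mathcal D,\pi(\hat e_w)]\|=1$.
   Context: $\Omega=\{0,1\}^{\mathbb N}$ with the shift $\sigma$; for $a\in\{0,1\}$, $ax=(a,x_1,\dots)$. $\mu$ is the measure of maximal entropy (uniform Bernoulli product measure), $L^2(\mu)$ the real Hilbert space with inner product $\langle\cdot,\cdot\rangle$. For a finite word $v$, $[v]$ is the cylinder of sequences beginning with $v$, $\chi_{[v]}$ its indicator, $\ell(v)$ its length, and $v0,v1$ the concatenations. For a nonempty word $w$, $e_w=2^{\ell(w)/2}(\chi_{[w1]}-\chi_{[w0]})$. Ruelle operator $L\phi(x)=\frac12(\phi(0x)+\phi(1x))$; Koopman operator $K\phi=\phi\circ\sigma$. On $\mathcal H=L^2(\mu)\times L^2(\mu)$ (norm $|(\phi_1,\phi_2)|^2=|\phi_1|^2+|\phi_2|^2$), $\mathcal D=\begin{pmatrix}0&K\\ L&0\end{pmatrix}$ and $\pi(A)=\begin{pmatrix}A&0\\0&A\end{pmatrix}$ for bounded $A$ on $L^2(\mu)$; $[\mathcal D,\pi(A)]=\mathcal D\pi(A)-\pi(A)\mathcal D$. $\|\cdot\|$ is the operator norm. *)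

theory Defs
  imports "HOL-Probability.Probability"
begin

text \<open>Omega = {0,1}^N is modelled as nat => bool (False = 0, True = 1);
  the coordinate x_1 of the paper is x 0.\<close>

type_synonym seq = "nat \<Rightarrow> bool"

definition mme :: "seq measure" where
  "mme = PiM UNIV (\<lambda>_::nat. measure_pmf (bernoulli_pmf (1/2)))"

definition shift :: "seq \<Rightarrow> seq" where
  "shift x = (\<lambda>n. x (Suc n))"

definition prepend :: "bool \<Rightarrow> seq \<Rightarrow> seq" where
  "prepend a x = case_nat a x"

definition Koop :: "(seq \<Rightarrow> real) \<Rightarrow> seq \<Rightarrow> real" where
  "Koop \<phi> = \<phi> \<circ> shift"

definition Ruelle :: "(seq \<Rightarrow> real) \<Rightarrow> seq \<Rightarrow> real" where
  "Ruelle \<phi> x = (\<phi> (prepend False x) + \<phi> (prepend True x)) / 2"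

definition cylinder :: "bool list \<Rightarrow> seq set" where
  "cylinder v = {x. \<forall>i<length v. x i = v ! i}"

definition ew :: "bool list \<Rightarrow> seq \<Rightarrow> real" where
  "ew w x = 2 powr (real (length w) / 2) *
     (indicator (cylinder (w @ [True])) x - indicator (cylinder (w @ [False])) x)"

definition L2 :: "(seq \<Rightarrow> real) set" where
  "L2 = {f. f \<in> borel_measurable mme \<and> integrable mme (\<lambda>x. (f x)\<^sup>2)}"

definition L2_inner :: "(seq \<Rightarrow> real) \<Rightarrow> (seq \<Rightarrow> real) \<Rightarrow> real" where
  "L2_inner f g = (\<integral>x. f x * g x \<partial>mme)"

definition L2_norm :: "(seq \<Rightarrow> real) \<Rightarrow> real" where
  "L2_norm f = sqrt (\<integral>x. (f x)\<^sup>2 \<partial>mme)"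

definition proj_ew :: "bool list \<Rightarrow> (seq \<Rightarrow> real) \<Rightarrow> seq \<Rightarrow> real" where
  "proj_ew w \<phi> = (\<lambda>x. L2_inner \<phi> (ew w) * ew w x)"

definition opnorm :: "((seq \<Rightarrow> real) \<Rightarrow> seq \<Rightarrow> real) \<Rightarrow> real" where
  "opnorm T = Sup {L2_norm (T \<phi>) | \<phi>. \<phi> \<in> L2 \<and> L2_norm \<phi> \<le> 1}"

type_synonym hvec = "(seq \<Rightarrow> real) \<times> (seq \<Rightarrow> real)"

definition H_norm :: "hvec \<Rightarrow> real" where
  "H_norm p = sqrt ((L2_norm (fst p))\<^sup>2 + (L2_norm (snd p))\<^sup>2)"

definition H_opnorm :: "(hvec \<Rightarrow> hvec) \<Rightarrow> real" where
  "H_opnorm T = Sup {H_norm (T p) | p. fst p \<in> L2 \<and> snd p \<in> L2 \<and> H_norm p \<le> 1}"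

definition Dirac :: "hvec \<Rightarrow> hvec" where
  "Dirac p = (Koop (snd p), Ruelle (fst p))"

definition rep :: "((seq \<Rightarrow> real) \<Rightarrow> seq \<Rightarrow> real) \<Rightarrow> hvec \<Rightarrow> hvec" where
  "rep A p = (A (fst p), A (snd p))"

definition H_comm :: "(hvec \<Rightarrow> hvec) \<Rightarrow> (hvec \<Rightarrow> hvec) \<Rightarrow> hvec \<Rightarrow> hvec" where
  "H_comm S T p = (let a = S (T p); b = T (S p) in
     (\<lambda>x. fst a x - fst b x, \<lambda>x. snd a x - snd b x))"

end

theory Submission
  imports Defs
begin

(* Write e = e_w and e_hat for the projection onto it. Adjointness of K and L,
   <K f, g> = <f, L g>, turns the commutators into the rank-two operators
     [K, e_hat] phi = <phi, e> K e - <phi, L e> e,    [L, e_hat] phi = <phi, e> L e - <phi, K e> e.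
   The function e has mean zero on the cylinder [w] and vanishes off it, so it is orthogonal to
   every function of the first length(w) coordinates, in particular to L e; by adjointness also
   K e is orthogonal to e. Since |e| = |K e| = 1 and |L e| <= 1, Bessel's inequality for two
   orthogonal vectors bounds both commutators by 1, and the values at e and at K e show that
   the bound is attained. The commutator with D acts on H by the two commutators with the
   components swapped, so its norm is 1 as well. *)

section \<open>The shift and the Ruelle operator on \<open>\<mu>\<close>\<close>

abbreviation coin :: "bool measure" where
  "coin \<equiv> measure_pmf (bernoulli_pmf (1/2))"

lemma space_mme [simp]: "space mme = UNIV"
  by (simp add: mme_def space_PiM)

lemma prob_space_mme: "prob_space mme"
  unfolding mme_def by (intro prob_space_PiM) (simp add: prob_space_measure_pmf)

lemma integrable_bounded_mme:
  fixes f :: "seq \<Rightarrow> real"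
  assumes "f \<in> borel_measurable mme" and "\<And>x. \<bar>f x\<bar> \<le> C"
  shows "integrable mme f"
proof -
  interpret prob_space mme
    by (rule prob_space_mme)
  show ?thesis
    using assms by (intro integrable_const_bound[where B = C]) auto
qed

lemma measurable_shift_mme [measurable]: "shift \<in> measurable mme mme"
  unfolding shift_def mme_def
  by (rule measurable_PiM_single') (auto simp: space_PiM)

lemma distr_shift_mme: "distr mme mme shift = mme"
proof -
  have "(\<lambda>x. \<lambda>n\<in>UNIV. x (Suc n)) = shift"
    by (simp add: shift_def fun_eq_iff)
  then show ?thesis
    using distr_PiM_reindex[of UNIV "\<lambda>_. coin" Suc UNIV]
    by (simp add: mme_def prob_space_measure_pmf)
qed

lemma measurable_prepend_pair [measurable]:
  "(\<lambda>(a, x). prepend a x) \<in> measurable (coin \<Otimes>\<^sub>M mme) mme"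
  unfolding mme_def prepend_def by measurable

lemma distr_prepend_mme: "distr (coin \<Otimes>\<^sub>M mme) mme (\<lambda>(a, x). prepend a x) = mme"
proof -
  interpret sequence_space coin
    by unfold_locales
  show ?thesis
    using PiM_iter unfolding mme_def prepend_def by simp
qed

lemma measurable_prepend_mme [measurable]: "prepend a \<in> measurable mme mme"
proof -
  have "(\<lambda>x. (\<lambda>(a, x). prepend a x) (a, x)) \<in> measurable mme mme"
    by measurable
  then show ?thesis
    by simp
qed

lemma Koop_apply [simp]: "Koop f x = f (shift x)"
  by (simp add: Koop_def)

lemma shift_prepend [simp]: "shift (prepend a x) = x"
  by (simp add: shift_def prepend_def)

lemma borel_measurable_Ruelle [measurable]:
  assumes [measurable]: "f \<in> borel_measurable mme"
  shows "Ruelle f \<in> borel_measurable mme"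
  unfolding Ruelle_def by measurable

lemma
  fixes f :: "seq \<Rightarrow> real"
  assumes [measurable]: "f \<in> borel_measurable mme"
  shows integrable_Koop_iff: "integrable mme (Koop f) \<longleftrightarrow> integrable mme f"
    and integral_Koop: "integral\<^sup>L mme (Koop f) = integral\<^sup>L mme f"
  using integrable_distr_eq[of shift mme mme f] integral_distr[of shift mme mme f]
  by (simp_all add: distr_shift_mme Koop_def o_def)

lemma
  fixes f :: "seq \<Rightarrow> real"
  assumes [measurable]: "f \<in> borel_measurable mme" and f: "integrable mme f"
  shows integrable_Ruelle: "integrable mme (Ruelle f)"
    and integral_Ruelle: "integral\<^sup>L mme (Ruelle f) = integral\<^sup>L mme f"
proof -
  interpret prob_space mme
    by (rule prob_space_mme)
  interpret pair_sigma_finite coin mme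
    by unfold_locales
  have f_pair: "integrable (coin \<Otimes>\<^sub>M mme) (\<lambda>(a, x). f (prepend a x))"
    using f integrable_distr_eq[of "\<lambda>(a, x). prepend a x" "coin \<Otimes>\<^sub>M mme" mme f,
        unfolded distr_prepend_mme]
    by (simp add: split_beta')
  have Ruelle_eq: "(\<integral>a. f (prepend a x) \<partial>coin) = Ruelle f x" for x
    by (simp add: Ruelle_def)
  show "integrable mme (Ruelle f)"
    using integrable_snd[of "\<lambda>a x. f (prepend a x)"] f_pair by (simp add: Ruelle_eq)
  have "integral\<^sup>L mme (Ruelle f) = integral\<^sup>L (coin \<Otimes>\<^sub>M mme) (\<lambda>(a, x). f (prepend a x))"
    using integral_snd[of "\<lambda>a x. f (prepend a x)"] f_pair by (simp add: Ruelle_eq)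
  also have "\<dots> = integral\<^sup>L mme f"
    using integral_distr[of "\<lambda>(a, x). prepend a x" "coin \<Otimes>\<^sub>M mme" mme f,
        unfolded distr_prepend_mme]
    by (simp add: split_beta')
  finally show "integral\<^sup>L mme (Ruelle f) = integral\<^sup>L mme f" .
qed

section \<open>Cylinders and the functions \<open>e\<^sub>w\<close>\<close>

lemma sets_cylinder [measurable]: "cylinder v \<in> sets mme"
proof -
  have "cylinder v = {x \<in> space mme. \<forall>i\<in>{..<length v}. x i = v ! i}"
    by (auto simp: cylinder_def)
  also have "\<dots> \<in> sets mme"
    unfolding mme_def by measurable
  finally show ?thesis .
qed

lemma prepend_in_cylinder_Cons:
  "prepend a x \<in> cylinder (b # v) \<longleftrightarrow> a = b \<and> x \<in> cylinder v"
  by (auto simp: cylinder_def prepend_def less_Suc_eq_0_disj)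

lemma Ruelle_indicator_cylinder_Cons:
  "Ruelle (indicator (cylinder (b # v))) = (\<lambda>x. indicator (cylinder v) x / 2)"
  by (cases b) (auto simp: Ruelle_def indicator_def prepend_in_cylinder_Cons fun_eq_iff)

lemma integral_indicator_cylinder:
  "integral\<^sup>L mme (indicator (cylinder v) :: seq \<Rightarrow> real) = (1/2) ^ length v"
proof (induction v)
  case Nil
  interpret prob_space mme
    by (rule prob_space_mme)
  have "cylinder [] = space mme"
    by (simp add: cylinder_def)
  then show ?case
    using prob_space by simp
next
  case (Cons b v)
  have "integral\<^sup>L mme (indicator (cylinder (b # v)) :: seq \<Rightarrow> real)
      = integral\<^sup>L mme (Ruelle (indicator (cylinder (b # v))))"
    by (rule integral_Ruelle[symmetric]) (auto intro!: integrable_bounded_mme[where C = 1])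
  also have "\<dots> = integral\<^sup>L mme (indicator (cylinder v) :: seq \<Rightarrow> real) / 2"
    by (simp add: Ruelle_indicator_cylinder_Cons)
  finally show ?case
    using Cons by simp
qed

lemma borel_measurable_ew [measurable]: "ew w \<in> borel_measurable mme"
  unfolding ew_def by measurable

lemma in_cylinder_snoc_iff: "x \<in> cylinder (v @ [b]) \<longleftrightarrow> x \<in> cylinder v \<and> x (length v) = b"
  by (auto simp: cylinder_def nth_append less_Suc_eq)

lemma ew_eq_0_outside: "x \<notin> cylinder w \<Longrightarrow> ew w x = 0"
  by (simp add: ew_def in_cylinder_snoc_iff)

lemma abs_ew_le: "\<bar>ew w x\<bar> \<le> 2 powr (real (length w) / 2)"
  by (auto simp: ew_def indicator_def in_cylinder_snoc_iff abs_mult)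

lemma ew_square:
  "(ew w x)\<^sup>2 = 2 ^ length w *
     (indicator (cylinder (w @ [True])) x + indicator (cylinder (w @ [False])) x)"
proof -
  have "(2 powr (real (length w) / 2))\<^sup>2 = 2 powr (real (length w) / 2 + real (length w) / 2)"
    unfolding power2_eq_square powr_add ..
  also have "\<dots> = 2 ^ length w"
    by (simp add: powr_realpow)
  finally have "(2 powr (real (length w) / 2))\<^sup>2 = 2 ^ length w" .
  then show ?thesis
    by (auto simp: ew_def power_mult_distrib indicator_def in_cylinder_snoc_iff)
qed

lemma measure_cylinder: "measure mme (cylinder v) = (1/2) ^ length v"
  using integral_indicator_cylinder[of v] by simp

lemma integrable_indicator_cylinder: "integrable mme (indicator (cylinder v) :: seq \<Rightarrow> real)"
  by (auto intro!: integrable_bounded_mme[where C = 1])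

lemma integral_ew: "integral\<^sup>L mme (ew w) = 0"
  unfolding ew_def by (simp add: integrable_indicator_cylinder measure_cylinder)

lemma integral_ew_square: "(\<integral>x. (ew w x)\<^sup>2 \<partial>mme) = 1"
  by (simp add: ew_square integrable_indicator_cylinder measure_cylinder power_add power_divide)

definition depends_on_prefix :: "nat \<Rightarrow> (seq \<Rightarrow> 'a) \<Rightarrow> bool" where
  "depends_on_prefix n g \<longleftrightarrow> (\<forall>x y. (\<forall>i<n. x i = y i) \<longrightarrow> g x = g y)"

lemma depends_on_prefix_ew: "depends_on_prefix (Suc (length w)) (ew w)"
  unfolding depends_on_prefix_def
proof (intro allI impI)
  fix x y :: seq
  assume "\<forall>i<Suc (length w). x i = y i"
  then have "x \<in> cylinder (w @ [b]) \<longleftrightarrow> y \<in> cylinder (w @ [b])" for b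
    by (simp add: cylinder_def)
  then show "ew w x = ew w y"
    by (simp add: ew_def indicator_def)
qed

lemma depends_on_prefix_Ruelle:
  assumes "depends_on_prefix (Suc n) g"
  shows "depends_on_prefix n (Ruelle g)"
  unfolding depends_on_prefix_def
proof (intro allI impI)
  fix x y :: seq
  assume "\<forall>i<n. x i = y i"
  then have "\<forall>i<Suc n. prepend a x i = prepend a y i" for a
    by (auto simp: prepend_def less_Suc_eq_0_disj)
  then have "g (prepend a x) = g (prepend a y)" for a
    using assms by (simp add: depends_on_prefix_def)
  then show "Ruelle g x = Ruelle g y"
    by (simp add: Ruelle_def)
qed

lemma integral_ew_mult_prefix_function:
  fixes g :: "seq \<Rightarrow> real"
  assumes "depends_on_prefix (length w) g"
  shows "(\<integral>x. g x * ew w x \<partial>mme) = 0"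
proof -
  define x\<^sub>0 :: seq where "x\<^sub>0 i = (if i < length w then w ! i else False)" for i
  have "g x * ew w x = g x\<^sub>0 * ew w x" for x
  proof (cases "x \<in> cylinder w")
    case True
    then have "g x = g x\<^sub>0"
      using assms by (simp add: depends_on_prefix_def cylinder_def x\<^sub>0_def)
    then show ?thesis
      by simp
  qed (simp add: ew_eq_0_outside)
  then have "(\<integral>x. g x * ew w x \<partial>mme) = (\<integral>x. g x\<^sub>0 * ew w x \<partial>mme)"
    by presburger
  also have "\<dots> = 0"
    by (simp add: integral_ew)
  finally show ?thesis .
qed

section \<open>\<open>L\<^sup>2\<close> estimates and operator norms\<close>

lemma borel_measurable_L2: "f \<in> L2 \<Longrightarrow> f \<in> borel_measurable mme"
  by (simp add: L2_def)

lemma integrable_square_L2: "f \<in> L2 \<Longrightarrow> integrable mme (\<lambda>x. (f x)\<^sup>2)"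
  by (simp add: L2_def)

lemma integrable_mult_L2:
  assumes "f \<in> L2" and "g \<in> L2"
  shows "integrable mme (\<lambda>x. f x * g x)"
proof (rule Bochner_Integration.integrable_bound)
  show "integrable mme (\<lambda>x. (f x)\<^sup>2 + (g x)\<^sup>2)"
    using assms by (simp add: integrable_square_L2)
  have [measurable]: "f \<in> borel_measurable mme" "g \<in> borel_measurable mme"
    using assms by (simp_all add: borel_measurable_L2)
  show "(\<lambda>x. f x * g x) \<in> borel_measurable mme"
    by measurable
  have "\<bar>f x * g x\<bar> \<le> (f x)\<^sup>2 + (g x)\<^sup>2" for x
  proof -
    have "\<bar>f x * g x\<bar> \<le> 2 * \<bar>f x * g x\<bar>"
      by simp
    also have "\<dots> \<le> (f x)\<^sup>2 + (g x)\<^sup>2"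
      using sum_squares_bound[of "\<bar>f x\<bar>" "\<bar>g x\<bar>"] by (simp add: abs_mult mult.assoc)
    finally show ?thesis .
  qed
  then show "AE x in mme. norm (f x * g x) \<le> norm ((f x)\<^sup>2 + (g x)\<^sup>2)"
    by simp
qed

lemma bounded_in_L2:
  assumes "f \<in> borel_measurable mme" and "\<And>x. \<bar>f x\<bar> \<le> C"
  shows "f \<in> L2"
proof -
  have "\<bar>(f x)\<^sup>2\<bar> \<le> C\<^sup>2" for x
    using assms(2)[of x] abs_le_square_iff[of "f x" C] by simp
  then show ?thesis
    using assms by (auto simp: L2_def intro!: integrable_bounded_mme[where C = "C\<^sup>2"])
qed

lemma ew_in_L2: "ew w \<in> L2"
  by (rule bounded_in_L2[OF borel_measurable_ew abs_ew_le])

lemma Koop_in_L2: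
  assumes f: "f \<in> L2"
  shows "Koop f \<in> L2"
proof -
  have [measurable]: "f \<in> borel_measurable mme"
    using f by (rule borel_measurable_L2)
  have "integrable mme (Koop (\<lambda>x. (f x)\<^sup>2))"
    using integrable_square_L2[OF f] by (simp add: integrable_Koop_iff)
  then show ?thesis
    by (simp add: L2_def Koop_def o_def)
qed

lemma Ruelle_square_le: "(Ruelle f x)\<^sup>2 \<le> Ruelle (\<lambda>x. (f x)\<^sup>2) x"
  using sum_squares_bound[of "f (prepend False x)" "f (prepend True x)"]
  by (simp add: Ruelle_def power2_eq_square field_simps)

lemma
  assumes f: "f \<in> L2"
  shows Ruelle_in_L2: "Ruelle f \<in> L2"
    and L2_inner_Ruelle_Ruelle_le: "L2_inner (Ruelle f) (Ruelle f) \<le> L2_inner f f"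
proof -
  have [measurable]: "f \<in> borel_measurable mme"
    using f by (rule borel_measurable_L2)
  have Ruelle_square: "integrable mme (Ruelle (\<lambda>x. (f x)\<^sup>2))"
    using integrable_Ruelle integrable_square_L2[OF f] by simp
  have "integrable mme (\<lambda>x. (Ruelle f x)\<^sup>2)"
  proof (rule Bochner_Integration.integrable_bound[OF Ruelle_square])
    show "AE x in mme. norm ((Ruelle f x)\<^sup>2) \<le> norm (Ruelle (\<lambda>x. (f x)\<^sup>2) x)"
      using Ruelle_square_le by (simp add: Ruelle_def)
  qed measurable
  then show Ruelle_f: "Ruelle f \<in> L2"
    by (simp add: L2_def)
  have "L2_inner (Ruelle f) (Ruelle f) \<le> integral\<^sup>L mme (Ruelle (\<lambda>x. (f x)\<^sup>2))"
    unfolding L2_inner_def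
    by (intro integral_mono integrable_mult_L2 Ruelle_f Ruelle_square)
      (simp add: Ruelle_square_le flip: power2_eq_square)
  also have "\<dots> = L2_inner f f"
    using integral_Ruelle integrable_square_L2[OF f]
    by (simp add: L2_inner_def power2_eq_square)
  finally show "L2_inner (Ruelle f) (Ruelle f) \<le> L2_inner f f" .
qed

lemma L2_inner_commute: "L2_inner f g = L2_inner g f"
  by (simp add: L2_inner_def mult.commute)

lemma L2_norm_nonneg: "0 \<le> L2_norm f"
  by (simp add: L2_norm_def)

lemma L2_norm_eq_1_iff: "L2_norm f = 1 \<longleftrightarrow> (L2_norm f)\<^sup>2 = 1"
  using L2_norm_nonneg[of f] by (simp add: power2_eq_1_iff)

lemma L2_norm_square: "(L2_norm f)\<^sup>2 = L2_inner f f"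
  by (simp add: L2_norm_def L2_inner_def power2_eq_square)

lemma L2_inner_Koop_Koop:
  assumes "f \<in> borel_measurable mme" and "g \<in> borel_measurable mme"
  shows "L2_inner (Koop f) (Koop g) = L2_inner f g"
  using integral_Koop[of "\<lambda>x. f x * g x"] assms by (simp add: L2_inner_def Koop_def o_def)

lemma L2_inner_Koop_left:
  assumes f: "f \<in> L2" and g: "g \<in> L2"
  shows "L2_inner (Koop f) g = L2_inner f (Ruelle g)"
proof -
  have "Ruelle (\<lambda>x. Koop f x * g x) = (\<lambda>x. f x * Ruelle g x)"
    by (simp add: Ruelle_def fun_eq_iff field_simps)
  moreover have "integrable mme (\<lambda>x. Koop f x * g x)"
    by (rule integrable_mult_L2[OF Koop_in_L2[OF f] g])
  moreover have [measurable]: "f \<in> borel_measurable mme" "g \<in> borel_measurable mme"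
    using f g by (simp_all add: borel_measurable_L2)
  ultimately show ?thesis
    using integral_Ruelle[of "\<lambda>x. Koop f x * g x"] by (simp add: L2_inner_def)
qed

lemma Bessel_inequality_two:
  assumes f: "f \<in> L2" and u: "u \<in> L2" and v: "v \<in> L2"
    and uu: "L2_inner u u = 1" and vu: "L2_inner v u = 0" and vv: "L2_inner v v \<le> 1"
  shows "(L2_inner f u)\<^sup>2 + (L2_inner f v)\<^sup>2 \<le> L2_inner f f"
proof -
  have uv: "L2_inner u v = 0"
    using vu by (simp add: L2_inner_commute)
  define s t where "s = L2_inner f u" and "t = L2_inner f v"
  have "(\<lambda>x. (f x - s * u x - t * v x)\<^sup>2) = (\<lambda>x. f x * f x - 2 * s * (f x * u x)
      - 2 * t * (f x * v x) + s\<^sup>2 * (u x * u x) + 2 * s * t * (u x * v x) + t\<^sup>2 * (v x * v x))"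
    by (simp add: fun_eq_iff power2_eq_square algebra_simps)
  then have "(\<integral>x. (f x - s * u x - t * v x)\<^sup>2 \<partial>mme) = L2_inner f f - 2 * s * L2_inner f u
      - 2 * t * L2_inner f v + s\<^sup>2 * L2_inner u u + 2 * s * t * L2_inner u v + t\<^sup>2 * L2_inner v v"
    using f u v by (simp add: L2_inner_def integrable_mult_L2)
  moreover have "0 \<le> (\<integral>x. (f x - s * u x - t * v x)\<^sup>2 \<partial>mme)"
    by simp
  moreover have "t\<^sup>2 * L2_inner v v \<le> t\<^sup>2"
    using vv by (simp add: mult_left_le)
  ultimately show ?thesis
    using uu uv by (simp add: s_def [symmetric] t_def [symmetric] power2_eq_square)
qed

lemma L2_norm_square_orthogonal_diff:
  assumes b: "b \<in> L2" and u: "u \<in> L2" and bu: "L2_inner b u = 0" and uu: "L2_inner u u = 1"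
  shows "(L2_norm (\<lambda>x. c * b x - d * u x))\<^sup>2 = c\<^sup>2 * L2_inner b b + d\<^sup>2"
proof -
  have "(\<lambda>x. (c * b x - d * u x) * (c * b x - d * u x)) =
      (\<lambda>x. c\<^sup>2 * (b x * b x) - 2 * c * d * (b x * u x) + d\<^sup>2 * (u x * u x))"
    by (simp add: fun_eq_iff power2_eq_square algebra_simps)
  then show ?thesis
    using b u bu uu by (simp add: L2_norm_square L2_inner_def integrable_mult_L2)
qed

lemma L2_norm_rank_two_le:
  assumes \<phi>: "\<phi> \<in> L2" and u: "u \<in> L2" and v: "v \<in> L2" and b: "b \<in> L2"
    and uu: "L2_inner u u = 1" and vu: "L2_inner v u = 0" and vv: "L2_inner v v \<le> 1"
    and bu: "L2_inner b u = 0" and bb: "L2_inner b b \<le> 1"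
  shows "L2_norm (\<lambda>x. L2_inner \<phi> u * b x - L2_inner \<phi> v * u x) \<le> L2_norm \<phi>"
proof (rule power2_le_imp_le)
  have "(L2_inner \<phi> u)\<^sup>2 * L2_inner b b \<le> (L2_inner \<phi> u)\<^sup>2"
    using bb by (simp add: mult_left_le)
  then show "(L2_norm (\<lambda>x. L2_inner \<phi> u * b x - L2_inner \<phi> v * u x))\<^sup>2 \<le> (L2_norm \<phi>)\<^sup>2"
    using L2_norm_square_orthogonal_diff[OF b u bu uu] Bessel_inequality_two[OF \<phi> u v uu vu vv]
    by (simp add: L2_norm_square)
qed (rule L2_norm_nonneg)

lemma opnorm_eq_1I:
  assumes "\<And>\<phi>. \<phi> \<in> L2 \<Longrightarrow> L2_norm (T \<phi>) \<le> L2_norm \<phi>"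
    and "z \<in> L2" and "L2_norm z = 1" and "L2_norm (T z) = 1"
  shows "opnorm T = 1"
  unfolding opnorm_def
proof (rule cSup_eq_maximum)
  show "1 \<in> {L2_norm (T \<phi>) |\<phi>. \<phi> \<in> L2 \<and> L2_norm \<phi> \<le> 1}"
    using assms(2-4) by force
qed (use assms(1) in force)

lemma H_opnorm_swap_eq_1I:
  assumes A: "\<And>\<phi>. \<phi> \<in> L2 \<Longrightarrow> L2_norm (A \<phi>) \<le> L2_norm \<phi>"
    and B: "\<And>\<phi>. \<phi> \<in> L2 \<Longrightarrow> L2_norm (B \<phi>) \<le> L2_norm \<phi>"
    and z: "z \<in> L2" "L2_norm z = 1" "L2_norm (A z) = 1"
  shows "H_opnorm (\<lambda>p. (A (snd p), B (fst p))) = 1"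
  unfolding H_opnorm_def
proof (rule cSup_eq_maximum)
  have zero: "(\<lambda>x. 0) \<in> L2" "L2_norm (\<lambda>x. 0) = 0"
    by (auto simp: L2_norm_def intro: bounded_in_L2[where C = 0])
  then have "L2_norm (B (\<lambda>x. 0)) = 0"
    using B[of "\<lambda>x. 0"] L2_norm_nonneg[of "B (\<lambda>x. 0)"] by simp
  then show "1 \<in> {H_norm (A (snd p), B (fst p)) |p. fst p \<in> L2 \<and> snd p \<in> L2 \<and> H_norm p \<le> 1}"
    using zero z by (force simp: H_norm_def intro!: exI[of _ "(\<lambda>x. 0, z)"])
next
  fix y
  assume "y \<in> {H_norm (A (snd p), B (fst p)) |p. fst p \<in> L2 \<and> snd p \<in> L2 \<and> H_norm p \<le> 1}"
  then obtain p where y: "y = H_norm (A (snd p), B (fst p))"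
    and p: "fst p \<in> L2" "snd p \<in> L2" "H_norm p \<le> 1"
    by blast
  have "y = sqrt ((L2_norm (B (fst p)))\<^sup>2 + (L2_norm (A (snd p)))\<^sup>2)"
    by (simp add: y H_norm_def add.commute)
  also have "\<dots> \<le> H_norm p"
    using A[OF p(2)] B[OF p(1)] unfolding H_norm_def
    by (intro real_sqrt_le_mono add_mono power_mono) (simp_all add: L2_norm_nonneg)
  finally show "y \<le> 1"
    using p(3) by simp
qed

section \<open>The commutators of \<open>K\<close> and \<open>L\<close> with the projection onto \<open>e\<^sub>w\<close>\<close>

lemma L2_inner_ew_ew: "L2_inner (ew w) (ew w) = 1"
  using integral_ew_square[of w] by (simp add: L2_inner_def power2_eq_square)

lemma L2_norm_ew: "L2_norm (ew w) = 1"
  by (simp add: L2_norm_eq_1_iff L2_norm_square L2_inner_ew_ew)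

lemma Koop_ew_in_L2: "Koop (ew w) \<in> L2"
  by (rule Koop_in_L2[OF ew_in_L2])

lemma Ruelle_ew_in_L2: "Ruelle (ew w) \<in> L2"
  by (rule Ruelle_in_L2[OF ew_in_L2])

lemma L2_inner_Koop_ew_Koop_ew: "L2_inner (Koop (ew w)) (Koop (ew w)) = 1"
  by (simp add: L2_inner_Koop_Koop L2_inner_ew_ew)

lemma L2_norm_Koop_ew: "L2_norm (Koop (ew w)) = 1"
  by (simp add: L2_norm_eq_1_iff L2_norm_square L2_inner_Koop_ew_Koop_ew)

lemma L2_inner_Ruelle_ew_Ruelle_ew_le: "L2_inner (Ruelle (ew w)) (Ruelle (ew w)) \<le> 1"
  using L2_inner_Ruelle_Ruelle_le[OF ew_in_L2, of w] by (simp add: L2_inner_ew_ew)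

lemma L2_inner_Ruelle_ew_ew: "L2_inner (Ruelle (ew w)) (ew w) = 0"
  unfolding L2_inner_def
  by (rule integral_ew_mult_prefix_function[OF depends_on_prefix_Ruelle[OF depends_on_prefix_ew]])

lemma L2_inner_ew_Ruelle_ew: "L2_inner (ew w) (Ruelle (ew w)) = 0"
  using L2_inner_Ruelle_ew_ew by (simp add: L2_inner_commute)

lemma L2_inner_Koop_ew_ew: "L2_inner (Koop (ew w)) (ew w) = 0"
  by (simp add: L2_inner_Koop_left ew_in_L2 L2_inner_ew_Ruelle_ew)

lemma Koop_commutator_proj_ew:
  assumes "\<phi> \<in> L2"
  shows "(\<lambda>x. Koop (proj_ew w \<phi>) x - proj_ew w (Koop \<phi>) x) =
    (\<lambda>x. L2_inner \<phi> (ew w) * Koop (ew w) x - L2_inner \<phi> (Ruelle (ew w)) * ew w x)"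
  using L2_inner_Koop_left[OF assms ew_in_L2] by (simp add: proj_ew_def)

lemma Ruelle_commutator_proj_ew:
  assumes "\<phi> \<in> L2"
  shows "(\<lambda>x. Ruelle (proj_ew w \<phi>) x - proj_ew w (Ruelle \<phi>) x) =
    (\<lambda>x. L2_inner \<phi> (ew w) * Ruelle (ew w) x - L2_inner \<phi> (Koop (ew w)) * ew w x)"
  using L2_inner_Koop_left[OF ew_in_L2 assms]
  by (simp add: proj_ew_def Ruelle_def L2_inner_commute fun_eq_iff field_simps)

lemma L2_norm_Koop_commutator_proj_ew_le:
  assumes "\<phi> \<in> L2"
  shows "L2_norm (\<lambda>x. Koop (proj_ew w \<phi>) x - proj_ew w (Koop \<phi>) x) \<le> L2_norm \<phi>"
  unfolding Koop_commutator_proj_ew[OF assms]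
  by (rule L2_norm_rank_two_le[OF assms ew_in_L2 Ruelle_ew_in_L2 Koop_ew_in_L2 L2_inner_ew_ew
        L2_inner_Ruelle_ew_ew L2_inner_Ruelle_ew_Ruelle_ew_le L2_inner_Koop_ew_ew])
    (simp add: L2_inner_Koop_ew_Koop_ew)

lemma L2_norm_Ruelle_commutator_proj_ew_le:
  assumes "\<phi> \<in> L2"
  shows "L2_norm (\<lambda>x. Ruelle (proj_ew w \<phi>) x - proj_ew w (Ruelle \<phi>) x) \<le> L2_norm \<phi>"
  unfolding Ruelle_commutator_proj_ew[OF assms]
  by (rule L2_norm_rank_two_le[OF assms ew_in_L2 Koop_ew_in_L2 Ruelle_ew_in_L2 L2_inner_ew_ew
        L2_inner_Koop_ew_ew _ L2_inner_Ruelle_ew_ew L2_inner_Ruelle_ew_Ruelle_ew_le])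
    (simp add: L2_inner_Koop_ew_Koop_ew)

lemma L2_norm_Koop_commutator_proj_ew_ew:
  "L2_norm (\<lambda>x. Koop (proj_ew w (ew w)) x - proj_ew w (Koop (ew w)) x) = 1"
  unfolding L2_norm_eq_1_iff Koop_commutator_proj_ew[OF ew_in_L2]
    L2_norm_square_orthogonal_diff[OF Koop_ew_in_L2 ew_in_L2 L2_inner_Koop_ew_ew L2_inner_ew_ew]
  by (simp add: L2_inner_ew_ew L2_inner_ew_Ruelle_ew L2_inner_Koop_ew_Koop_ew)

lemma L2_norm_Ruelle_commutator_proj_ew_Koop_ew:
  "L2_norm (\<lambda>x. Ruelle (proj_ew w (Koop (ew w))) x - proj_ew w (Ruelle (Koop (ew w))) x) = 1"
  unfolding L2_norm_eq_1_iff Ruelle_commutator_proj_ew[OF Koop_ew_in_L2]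
    L2_norm_square_orthogonal_diff[OF Ruelle_ew_in_L2 ew_in_L2 L2_inner_Ruelle_ew_ew L2_inner_ew_ew]
  by (simp add: L2_inner_Koop_ew_ew L2_inner_Koop_ew_Koop_ew)

lemma H_comm_Dirac_rep:
  "H_comm Dirac (rep A) = (\<lambda>p. (\<lambda>x. Koop (A (snd p)) x - A (Koop (snd p)) x,
                                 \<lambda>x. Ruelle (A (fst p)) x - A (Ruelle (fst p)) x))"
  by (simp add: fun_eq_iff H_comm_def Dirac_def rep_def)

theorem theorem2p4:
  fixes w :: "bool list"
  assumes "length w \<ge> 2"
  shows "opnorm (\<lambda>\<phi> x. Koop (proj_ew w \<phi>) x - proj_ew w (Koop \<phi>) x) = 1 \<and>
         opnorm (\<lambda>\<phi> x. Ruelle (proj_ew w \<phi>) x - proj_ew w (Ruelle \<phi>) x) = 1 \<and>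
         H_opnorm (H_comm Dirac (rep (proj_ew w))) = 1"
proof (intro conjI)
  show "opnorm (\<lambda>\<phi> x. Koop (proj_ew w \<phi>) x - proj_ew w (Koop \<phi>) x) = 1"
    by (rule opnorm_eq_1I[OF L2_norm_Koop_commutator_proj_ew_le ew_in_L2 L2_norm_ew
          L2_norm_Koop_commutator_proj_ew_ew])
  show "opnorm (\<lambda>\<phi> x. Ruelle (proj_ew w \<phi>) x - proj_ew w (Ruelle \<phi>) x) = 1"
    by (rule opnorm_eq_1I[OF L2_norm_Ruelle_commutator_proj_ew_le Koop_ew_in_L2 L2_norm_Koop_ew
          L2_norm_Ruelle_commutator_proj_ew_Koop_ew])
  show "H_opnorm (H_comm Dirac (rep (proj_ew w))) = 1"
    unfolding H_comm_Dirac_rep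
    by (rule H_opnorm_swap_eq_1I[OF L2_norm_Koop_commutator_proj_ew_le
          L2_norm_Ruelle_commutator_proj_ew_le ew_in_L2 L2_norm_ew L2_norm_Koop_commutator_proj_ew_ew])
qed

end
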